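(* Let an instance be given with $x_i,r_i\in\mathbb{N}$ for all $i=1,\dots,n$ and $L\in\mathbb{N}$, and suppose it admits a feasible solution. Then there exists a minimum-cost feasible solution $y$ with $y_i\in\mathbb{Z}$ for every $i$.
   Context: A solution is $y\in\mathbb{R}^n$; sensor $i$ at $y_i$ covers $[y_i-r_i,y_i+r_i]$; $y$ is feasible if $[0,L]\subseteq\bigcup_i[y_i-r_i,y_i+r_i]$; its cost is $\sum_i|y_i-x_i|$. *)

theory Defs
  imports Complex_Main
begin

text \<open>Sensors are indexed by i < n (the paper's 1..n). A solution is y :: nat => real,
  only its values on {..<n} matter.\<close>

definition feasible :: "nat \<Rightarrow> (nat \<Rightarrow> real) \<Rightarrow> real \<Rightarrow> (nat \<Rightarrow> real) \<Rightarrow> bool" where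
  "feasible n r L y \<longleftrightarrow> {0..L} \<subseteq> (\<Union>i<n. {y i - r i .. y i + r i})"

definition cost :: "nat \<Rightarrow> (nat \<Rightarrow> real) \<Rightarrow> (nat \<Rightarrow> real) \<Rightarrow> real" where
  "cost n x y = (\<Sum>i<n. \<bar>y i - x i\<bar>)"

end

theory Submission imports Defs "HOL-Analysis.Analysis" begin

text \<open>For a threshold \<open>t \<in> [0,1)\<close> round every coordinate to
  \<open>\<lceil>y\<^sub>i - t\<rceil>\<close>, i.e.\ up exactly when its fractional part exceeds \<open>t\<close>. Since the ranges
  \<open>r\<^sub>i\<close> and the length \<open>L\<close> are integers, every such rounding of a feasible solution stays
  feasible: a sensor covering \<open>m + t\<close> and a little to its right covers all of \<open>[m, m + 1]\<close>
  once rounded. Since the \<open>x\<^sub>i\<close> are integers, for uniformly distributed \<open>t\<close> the expected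
  distance of the rounded coordinate to \<open>x\<^sub>i\<close> equals \<open>|y\<^sub>i - x\<^sub>i|\<close>, so some threshold costs
  at most as much as \<open>y\<close>. Integral solutions thus beat arbitrary ones, and as their costs
  are natural numbers a cheapest one exists.\<close>

definition threshold_round :: "real \<Rightarrow> real \<Rightarrow> int" where
  "threshold_round t y = \<lceil>y - t\<rceil>"

lemma threshold_round_eq:
  assumes "0 \<le> t" "t < 1"
  shows "threshold_round t y = \<lfloor>y\<rfloor> + (if t < frac y then 1 else 0)"
proof -
  have "of_int \<lfloor>y\<rfloor> \<le> y" "y < of_int \<lfloor>y\<rfloor> + 1"
    by linarith+
  then show ?thesis
    unfolding threshold_round_def frac_def
    by (cases "t < y - of_int \<lfloor>y\<rfloor>") (simp_all, (rule ceiling_unique; use assms in linarith)+)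
qed

lemma has_integral_threshold_round_dist:
  fixes m :: int
  shows "((\<lambda>t. \<bar>of_int (threshold_round t y) - of_int m\<bar>) has_integral \<bar>y - of_int m\<bar>) {0..1}"
proof -
  define k where "k = \<lfloor>y\<rfloor>"
  define f where "f = frac y"
  have f: "0 \<le> f" "f < 1"
    unfolding f_def by (simp_all add: frac_lt_1)
  have y_split: "y = of_int k + f"
    unfolding f_def k_def frac_def by simp
  have round_up: "((\<lambda>t. \<bar>of_int (threshold_round t y) - of_int m\<bar>)
      has_integral f * \<bar>of_int k + 1 - of_int m\<bar>) {0..f}"
  proof (rule has_integral_spike_finite[of "{f}"])
    show "((\<lambda>t. \<bar>of_int k + 1 - of_int m\<bar>) has_integral f * \<bar>of_int k + 1 - of_int m\<bar>) {0..f}"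
      using has_integral_const_real[of "\<bar>of_int k + 1 - of_int m\<bar> :: real" 0 f] f by simp
    fix t assume "t \<in> {0..f} - {f}"
    then have "0 \<le> t" "t < 1" "t < f"
      using f by auto
    then show "\<bar>of_int (threshold_round t y) - of_int m\<bar> = \<bar>of_int k + 1 - (of_int m :: real)\<bar>"
      by (simp add: threshold_round_eq k_def f_def)
  qed simp
  have round_down: "((\<lambda>t. \<bar>of_int (threshold_round t y) - of_int m\<bar>)
      has_integral (1 - f) * \<bar>of_int k - of_int m\<bar>) {f..1}"
  proof (rule has_integral_spike_finite[of "{1}"])
    show "((\<lambda>t. \<bar>of_int k - of_int m\<bar>) has_integral (1 - f) * \<bar>of_int k - of_int m\<bar>) {f..1}"
      using has_integral_const_real[of "\<bar>of_int k - of_int m\<bar> :: real" f 1] f by simp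
    fix t assume "t \<in> {f..1} - {1}"
    then have "0 \<le> t" "t < 1" "\<not> t < f"
      using f by auto
    then show "\<bar>of_int (threshold_round t y) - of_int m\<bar> = \<bar>of_int k - (of_int m :: real)\<bar>"
      by (simp add: threshold_round_eq k_def f_def)
  qed simp
  have "f * \<bar>of_int k + 1 - of_int m\<bar> + (1 - f) * \<bar>of_int k - of_int m\<bar> = \<bar>y - of_int m\<bar>"
  proof (cases "m \<le> k")
    case True
    then have "(of_int m :: real) \<le> of_int k" by simp
    then show ?thesis using f y_split by (simp add: algebra_simps)
  next
    case False
    then have "(of_int k :: real) + 1 \<le> of_int m" by linarith
    then show ?thesis using f y_split by (simp add: algebra_simps)
  qed
  then show ?thesis
    using has_integral_combine[OF _ _ round_up round_down] f by simp
qed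

text \<open>The rounded sum depends on \<open>t\<close> only through the set of coordinates rounded up, so
  it takes finitely many values and attains its minimum, which is at most its integral.\<close>

lemma exists_threshold_round_sum_le:
  fixes y :: "'a \<Rightarrow> real" and m :: "'a \<Rightarrow> int"
  assumes "finite I"
  shows "\<exists>t. 0 \<le> t \<and> t < 1 \<and>
    (\<Sum>i\<in>I. \<bar>of_int (threshold_round t (y i)) - of_int (m i)\<bar>) \<le> (\<Sum>i\<in>I. \<bar>y i - of_int (m i)\<bar>)"
proof -
  define S :: "real \<Rightarrow> real"
    where "S t = (\<Sum>i\<in>I. \<bar>of_int (threshold_round t (y i)) - of_int (m i)\<bar>)" for t
  define G :: "'a set \<Rightarrow> real"
    where "G K = (\<Sum>i\<in>I. \<bar>of_int (\<lfloor>y i\<rfloor> + (if i \<in> K then 1 else 0)) - of_int (m i)\<bar>)" for K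
  have S_eq: "S t = G {i\<in>I. t < frac (y i)}" if "0 \<le> t" "t < 1" for t
    unfolding S_def G_def by (rule sum.cong) (auto simp: threshold_round_eq[OF that])
  have "S ` {0..<1} \<subseteq> G ` Pow I"
    using S_eq by (auto intro!: imageI)
  then have finite: "finite (S ` {0..<1})"
    by (rule finite_subset) (use assms in simp)
  obtain t0 where t0: "t0 \<in> {0..<1}" "S t0 = Min (S ` {0..<1})"
    using Min_in[OF finite] by auto
  have min: "S t0 \<le> S t" if "t \<in> {0..<1}" for t
    using t0 Min_le[OF finite] that by simp
  have "(S has_integral (\<Sum>i\<in>I. \<bar>y i - of_int (m i)\<bar>)) {0..1}"
    unfolding S_def by (rule has_integral_sum[OF assms has_integral_threshold_round_dist])
  then have integral: "((\<lambda>t. if t = 1 then S t0 else S t)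
      has_integral (\<Sum>i\<in>I. \<bar>y i - of_int (m i)\<bar>)) {0..1}"
    by (rule has_integral_spike_finite[of "{1}", rotated 2]) simp_all
  have "((\<lambda>t::real. S t0) has_integral S t0) {0..1}"
    using has_integral_const_real[of "S t0" 0 1] by simp
  then have "S t0 \<le> (\<Sum>i\<in>I. \<bar>y i - of_int (m i)\<bar>)"
    by (rule has_integral_le[OF _ integral]) (simp add: min)
  then show ?thesis
    using t0 unfolding S_def by auto
qed

lemma interval_cover_right_open:
  fixes l u :: "'a \<Rightarrow> real"
  assumes "finite I" "{a..b} \<subseteq> (\<Union>i\<in>I. {l i..u i})" "a \<le> t" "t < b"
  shows "\<exists>i\<in>I. l i \<le> t \<and> t < u i"
proof (rule ccontr)
  assume not_right_open: "\<not> ?thesis"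
  define D where "D = {l i - t | i. i \<in> I \<and> t < l i} \<union> {b - t}"
  have "finite D" "D \<noteq> {}"
    using assms(1) unfolding D_def by auto
  define d where "d = Min D"
  have "d \<in> D"
    unfolding d_def using \<open>finite D\<close> \<open>D \<noteq> {}\<close> by (rule Min_in)
  then have "0 < d"
    using assms(4) unfolding D_def by auto
  have d_le: "d \<le> e" if "e \<in> D" for e
    unfolding d_def using \<open>finite D\<close> that by (rule Min_le)
  have "d \<le> b - t"
    by (rule d_le) (simp add: D_def)
  then have "t + d / 2 \<in> {a..b}"
    using \<open>0 < d\<close> assms(3) by auto
  then obtain i where i: "i \<in> I" "l i \<le> t + d / 2" "t + d / 2 \<le> u i"
    using assms(2) by auto
  show False
  proof (cases "l i \<le> t")
    case True
    then show False using not_right_open i \<open>0 < d\<close> by force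
  next
    case False
    then have "d \<le> l i - t"
      using i(1) by (intro d_le) (auto simp: D_def)
    then show False using i \<open>0 < d\<close> by auto
  qed
qed

lemma threshold_round_covers_int:
  fixes s r :: int and t y :: real
  assumes "0 \<le> t" "t < 1" "y - r \<le> s" "s \<le> y + r"
  shows "threshold_round t y - r \<le> s" "s \<le> threshold_round t y + r"
  using assms unfolding threshold_round_def ceiling_le_iff le_ceiling_iff by linarith+

lemma threshold_round_covers_unit_interval:
  fixes m r :: int and t y :: real
  assumes "y - r \<le> m + t" "m + t < y + r"
  shows "threshold_round t y - r \<le> m" "m + 1 \<le> threshold_round t y + r"
  using assms unfolding threshold_round_def ceiling_le_iff le_ceiling_iff by linarith+

lemma feasible_threshold_round:
  fixes r :: "nat \<Rightarrow> nat" and L :: nat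
  assumes feas: "feasible n (\<lambda>i. real (r i)) (real L) y" and "0 \<le> t" "t < 1"
  shows "feasible n (\<lambda>i. real (r i)) (real L) (\<lambda>i. of_int (threshold_round t (y i)))"
  unfolding feasible_def
proof
  fix s assume s: "s \<in> {0..real L}"
  show "s \<in> (\<Union>i<n. {of_int (threshold_round t (y i)) - real (r i)
                      .. of_int (threshold_round t (y i)) + real (r i)})"
  proof (cases "s \<in> \<int>")
    case True
    then obtain j where j: "s = of_int j" by (auto elim: Ints_cases)
    obtain i where i: "i < n" "y i - r i \<le> s" "s \<le> y i + r i"
      using feas s unfolding feasible_def by auto
    have "of_int (threshold_round t (y i) - int (r i)) \<le> (of_int j :: real)"
      "(of_int j :: real) \<le> of_int (threshold_round t (y i) + int (r i))"
      using threshold_round_covers_int[OF assms(2,3), where y = "y i" and r = "int (r i)" and s = j]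
        i j unfolding of_int_le_iff by simp_all
    then have "s \<in> {of_int (threshold_round t (y i)) - real (r i)
                    .. of_int (threshold_round t (y i)) + real (r i)}"
      using j by simp
    then show ?thesis
      using i(1) by blast
  next
    case False
    define m where "m = \<lfloor>s\<rfloor>"
    have "of_int m \<noteq> s"
      using False by (metis Ints_of_int)
    then have s_in: "of_int m < s" "s < of_int m + 1"
      unfolding m_def by linarith+
    have "0 \<le> m"
      using s unfolding m_def by simp
    have "of_int m < real L"
      using s s_in by simp
    then have "m < int L"
      by (metis of_int_less_iff of_int_of_nat_eq)
    then have "0 \<le> of_int m + t" "of_int m + t < real L"
      using \<open>0 \<le> m\<close> assms(2,3) by linarith+
    then have "\<exists>i\<in>{..<n}. y i - r i \<le> of_int m + t \<and> of_int m + t < y i + r i"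
      using feas unfolding feasible_def by (intro interval_cover_right_open) simp_all
    then obtain i where i: "i < n" "y i - r i \<le> of_int m + t" "of_int m + t < y i + r i"
      by blast
    then have "of_int (threshold_round t (y i) - int (r i)) \<le> (of_int m :: real)"
      "(of_int (m + 1) :: real) \<le> of_int (threshold_round t (y i) + int (r i))"
      using threshold_round_covers_unit_interval[where y = "y i" and r = "int (r i)" and m = m]
      unfolding of_int_le_iff by simp_all
    then have "s \<in> {of_int (threshold_round t (y i)) - real (r i)
                    .. of_int (threshold_round t (y i)) + real (r i)}"
      using s_in by simp
    then show ?thesis
      using i(1) by blast
  qed
qed

lemma exists_integral_feasible_cost_le:
  fixes r x :: "nat \<Rightarrow> nat" and L :: nat
  assumes "feasible n (\<lambda>i. real (r i)) (real L) z"
  shows "\<exists>w. feasible n (\<lambda>i. real (r i)) (real L) w \<and> (\<forall>i<n. w i \<in> \<int>)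
           \<and> cost n (\<lambda>i. real (x i)) w \<le> cost n (\<lambda>i. real (x i)) z"
proof -
  obtain t where t: "0 \<le> t" "t < 1"
    "(\<Sum>i<n. \<bar>of_int (threshold_round t (z i)) - of_int (int (x i))\<bar>)
       \<le> (\<Sum>i<n. \<bar>z i - of_int (int (x i))\<bar>)"
    using exists_threshold_round_sum_le[of "{..<n}" z "\<lambda>i. int (x i)"] by auto
  show ?thesis
    by (rule exI[of _ "\<lambda>i. of_int (threshold_round t (z i))"])
      (use t feasible_threshold_round[OF assms t(1,2)] in \<open>simp add: cost_def\<close>)
qed

lemma cost_eq_nat_floor:
  assumes "\<forall>i<n. w i \<in> \<int>" "\<forall>i<n. c i \<in> \<int>"
  shows "cost n c w = real (nat \<lfloor>cost n c w\<rfloor>)"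
proof -
  have "cost n c w \<in> \<int>"
    unfolding cost_def using assms by (intro Ints_sum Ints_abs Ints_diff) auto
  then obtain k where k: "cost n c w = of_int k"
    by (auto elim: Ints_cases)
  have "0 \<le> cost n c w"
    unfolding cost_def by (simp add: sum_nonneg)
  then show ?thesis
    using k by simp
qed

theorem lemmaA1:
  fixes n L :: nat and x r :: "nat \<Rightarrow> nat"
  assumes "\<exists>y. feasible n (\<lambda>i. real (r i)) (real L) y"
  shows "\<exists>y. feasible n (\<lambda>i. real (r i)) (real L) y
           \<and> (\<forall>z. feasible n (\<lambda>i. real (r i)) (real L) z \<longrightarrow>
                  cost n (\<lambda>i. real (x i)) y \<le> cost n (\<lambda>i. real (x i)) z)
           \<and> (\<forall>i<n. y i \<in> \<int>)"
proof -
  let ?feasible = "feasible n (\<lambda>i. real (r i)) (real L)" and ?cost = "cost n (\<lambda>i. real (x i))"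
  define integral_feasible where "integral_feasible w \<longleftrightarrow> ?feasible w \<and> (\<forall>i<n. w i \<in> \<int>)" for w
  obtain w0 where "integral_feasible w0"
    using assms exists_integral_feasible_cost_le unfolding integral_feasible_def by blast
  then obtain y where y: "integral_feasible y"
    and least: "\<And>v. integral_feasible v \<Longrightarrow> nat \<lfloor>?cost y\<rfloor> \<le> nat \<lfloor>?cost v\<rfloor>"
    using ex_has_least_nat[of integral_feasible w0 "\<lambda>w. nat \<lfloor>?cost w\<rfloor>"] by blast
  have "?cost y \<le> ?cost z" if z: "?feasible z" for z
  proof -
    obtain v where v: "integral_feasible v" "?cost v \<le> ?cost z"
      using exists_integral_feasible_cost_le[OF z] unfolding integral_feasible_def by blast
    have "?cost y \<le> ?cost v"
      using least[OF v(1)] y v(1) cost_eq_nat_floor[of n _ "\<lambda>i. real (x i)"]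
      unfolding integral_feasible_def by (metis Ints_of_nat of_nat_le_iff)
    with v(2) show ?thesis
      by linarith
  qed
  with y show ?thesis
    unfolding integral_feasible_def by blast
qed

end
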